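(* Let $R$ be a finite ranked poset with a unique maximum element $\hat 1^R$. Let $\hat R=R\cup\{\hat 1\}$, where $\hat 1$ is a new element greater than every element of $R$ and of rank $|\hat 1^R|+1$, and let $\dot R=\hat R\setminus\{\hat 1^R\}$ with the induced order and ranks. Then $$\mathcal{M}_{\dot R}(z)=\mathcal{M}_{\hat R}(z)-(1-z)\,g^R_{|R|}(z),$$ where $|R|=|\hat 1^R|$ is the rank of $R$.
   Context: A ranked poset is a poset with a rank function $|\cdot|$ such that covering relations increase rank by exactly one and minimal elements have rank $-1$ (in $\hat R,\dot R$ the new element $\hat 1$ is assigned rank $|\hat 1^R|+1$ as stated). The Möbius function $\mu$ is $\mu[p,p]=1$, $\mu[p,q]=-\sum_{p\le s<q}\mu[p,s]$ for $p<q$, $0$ if $p\not\le q$; $\mu_z[p,q]=\mu[p,q]z^{|q|-|p|}$; $\mathcal{M}_P(z)=\sum_{p\le q\in P}\mu_z[p,q]$. The top polynomial of $R$ is $g^R_{|R|}(z)=\sum_{p\le q,\ |p|\le |R|\le|q|}\mu_z[p,q]=\sum_{p\in R}\mu_z[p,\hat 1^R]$. *)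

theory Defs
  imports "HOL-Computational_Algebra.Polynomial"
begin

definition partial_order_on' :: "'a set \<Rightarrow> ('a \<Rightarrow> 'a \<Rightarrow> bool) \<Rightarrow> bool" where
  "partial_order_on' P le \<longleftrightarrow>
     (\<forall>x\<in>P. le x x) \<and>
     (\<forall>x\<in>P. \<forall>y\<in>P. le x y \<and> le y x \<longrightarrow> x = y) \<and>
     (\<forall>x\<in>P. \<forall>y\<in>P. \<forall>w\<in>P. le x y \<and> le y w \<longrightarrow> le x w)"

definition covers :: "'a set \<Rightarrow> ('a \<Rightarrow> 'a \<Rightarrow> bool) \<Rightarrow> 'a \<Rightarrow> 'a \<Rightarrow> bool" where
  "covers P le x y \<longleftrightarrow> x \<in> P \<and> y \<in> P \<and> le x y \<and> x \<noteq> y \<and>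
     \<not> (\<exists>w\<in>P. le x w \<and> le w y \<and> w \<noteq> x \<and> w \<noteq> y)"

definition ranked_poset :: "'a set \<Rightarrow> ('a \<Rightarrow> 'a \<Rightarrow> bool) \<Rightarrow> ('a \<Rightarrow> int) \<Rightarrow> bool" where
  "ranked_poset P le rk \<longleftrightarrow> finite P \<and> partial_order_on' P le \<and>
     (\<forall>x y. covers P le x y \<longrightarrow> rk y = rk x + 1) \<and>
     (\<forall>x\<in>P. (\<forall>y\<in>P. le y x \<longrightarrow> y = x) \<longrightarrow> rk x = -1)"

definition is_mobius :: "'a set \<Rightarrow> ('a \<Rightarrow> 'a \<Rightarrow> bool) \<Rightarrow> ('a \<Rightarrow> 'a \<Rightarrow> int) \<Rightarrow> bool" where
  "is_mobius P le f \<longleftrightarrow>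
     (\<forall>p q. (p \<notin> P \<or> q \<notin> P) \<longrightarrow> f p q = 0) \<and>
     (\<forall>p\<in>P. \<forall>q\<in>P. f p q =
        (if p = q then 1
         else if le p q then - (\<Sum>s\<in>{s\<in>P. le p s \<and> le s q \<and> s \<noteq> q}. f p s)
         else 0))"

definition mobius :: "'a set \<Rightarrow> ('a \<Rightarrow> 'a \<Rightarrow> bool) \<Rightarrow> 'a \<Rightarrow> 'a \<Rightarrow> int" where
  "mobius P le = (THE f. is_mobius P le f)"

definition mobius_z :: "'a set \<Rightarrow> ('a \<Rightarrow> 'a \<Rightarrow> bool) \<Rightarrow> ('a \<Rightarrow> int) \<Rightarrow> 'a \<Rightarrow> 'a \<Rightarrow> int poly" where
  "mobius_z P le rk p q = monom (mobius P le p q) (nat (rk q - rk p))"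

definition mobius_poly :: "'a set \<Rightarrow> ('a \<Rightarrow> 'a \<Rightarrow> bool) \<Rightarrow> ('a \<Rightarrow> int) \<Rightarrow> int poly" where
  "mobius_poly P le rk = (\<Sum>(p,q)\<in>{(p,q)\<in>P \<times> P. le p q}. mobius_z P le rk p q)"

definition g_poly :: "'a set \<Rightarrow> ('a \<Rightarrow> 'a \<Rightarrow> bool) \<Rightarrow> ('a \<Rightarrow> int) \<Rightarrow> int \<Rightarrow> int poly" where
  "g_poly P le rk k = (\<Sum>(p,q)\<in>{(p,q)\<in>P \<times> P. le p q \<and> rk p \<le> k \<and> k \<le> rk q}. mobius_z P le rk p q)"

text \<open>The hat construction: new element None above everything.\<close>
definition hat_le :: "('a \<Rightarrow> 'a \<Rightarrow> bool) \<Rightarrow> 'a option \<Rightarrow> 'a option \<Rightarrow> bool" where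
  "hat_le le x y \<longleftrightarrow> y = None \<or> (\<exists>a b. x = Some a \<and> y = Some b \<and> le a b)"

definition hat_rk :: "('a \<Rightarrow> int) \<Rightarrow> 'a \<Rightarrow> 'a option \<Rightarrow> int" where
  "hat_rk rk t x = (case x of None \<Rightarrow> rk t + 1 | Some a \<Rightarrow> rk a)"

definition hat_set :: "'a set \<Rightarrow> 'a option set" where
  "hat_set P = insert None (Some ` P)"

definition dot_set :: "'a set \<Rightarrow> 'a \<Rightarrow> 'a option set" where
  "dot_set P t = hat_set P - {Some t}"

end

theory Submission imports Defs begin

(*
  Write x for the monomial z and M_P for mobius_poly P.  Since the rank-|R|
  element t of R is its maximum, the removed set is harmless: dot_set R t is just
  hat_set (R - {t}), the poset R - {t} with a new top element adjoined.  So the theorem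
  follows from one general formula for the Moebius polynomial of a hatted poset P:
      M_{hat P} = 1 + M_P + sum_{p in P} -(sum_{s >= p} mu_P(p,s)) * x^(rk(1hat) - rk p).
  For P = R the inner sums are Kronecker deltas at t, giving M_{hat R} = 1 - x + M_R.
  For P = R - {t} (whose Moebius function is the restriction of mu_R, as R - {t} is
  order-convex in R) the inner sums are -mu_R(p,t), giving M_{dot R} = 1 + x (G - 1) + M_{R-{t}},
  where G = sum_p mu_R(p,t) x^(rk t - rk p) is the top polynomial g^R_{|R|}.  Finally
  M_R = G + M_{R-{t}}, and the identity is ring arithmetic.
*)

lemma po_refl: "partial_order_on' P le \<Longrightarrow> x \<in> P \<Longrightarrow> le x x"
  unfolding partial_order_on'_def by blast

lemma po_antisym:
  "partial_order_on' P le \<Longrightarrow> x \<in> P \<Longrightarrow> y \<in> P \<Longrightarrow> le x y \<Longrightarrow> le y x \<Longrightarrow> x = y"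
  unfolding partial_order_on'_def by blast

lemma po_trans:
  "partial_order_on' P le \<Longrightarrow> x \<in> P \<Longrightarrow> y \<in> P \<Longrightarrow> w \<in> P \<Longrightarrow> le x y \<Longrightarrow> le y w \<Longrightarrow> le x w"
  unfolding partial_order_on'_def by blast

lemma po_subset: "partial_order_on' A le \<Longrightarrow> B \<subseteq> A \<Longrightarrow> partial_order_on' B le"
  unfolding partial_order_on'_def by blast

text \<open>Closed intervals; their cardinality is the measure for all inductions below.\<close>

definition ivl :: "'a set \<Rightarrow> ('a \<Rightarrow> 'a \<Rightarrow> bool) \<Rightarrow> 'a \<Rightarrow> 'a \<Rightarrow> 'a set" where
  "ivl P le p q = {s\<in>P. le p s \<and> le s q}"

lemma ivl_less:
  assumes po: "partial_order_on' P le" and fin: "finite P"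
    and "p \<in> P" "q \<in> P" "s \<in> P" "le p s" "le s q" "s \<noteq> q"
  shows "card (ivl P le p s) < card (ivl P le p q)"
proof (rule psubset_card_mono)
  show "finite (ivl P le p q)" using fin unfolding ivl_def by simp
  have sub: "ivl P le p s \<subseteq> ivl P le p q" using assms po_trans[OF po] unfolding ivl_def by blast
  have "q \<in> ivl P le p q" using assms po_refl[OF po] po_trans[OF po] unfolding ivl_def by blast
  moreover have "q \<notin> ivl P le p s" using assms po_antisym[OF po] unfolding ivl_def by blast
  ultimately show "ivl P le p s \<subset> ivl P le p q" using sub by blast
qed

lemma is_mobius_outside:
  assumes "is_mobius P le f" "p \<notin> P \<or> q \<notin> P"
  shows "f p q = 0"
proof -
  have "\<forall>p q. (p \<notin> P \<or> q \<notin> P) \<longrightarrow> f p q = 0"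
    using assms(1) unfolding is_mobius_def by (rule conjunct1)
  then show ?thesis using assms(2) by blast
qed

lemma is_mobius_rec:
  assumes "is_mobius P le f" "p \<in> P" "q \<in> P"
  shows "f p q = (if p = q then 1 else if le p q
           then - (\<Sum>s\<in>{s\<in>P. le p s \<and> le s q \<and> s \<noteq> q}. f p s) else 0)"
proof -
  have "\<forall>p\<in>P. \<forall>q\<in>P. f p q = (if p = q then 1 else if le p q
           then - (\<Sum>s\<in>{s\<in>P. le p s \<and> le s q \<and> s \<noteq> q}. f p s) else 0)"
    using assms(1) unfolding is_mobius_def by (rule conjunct2)
  then show ?thesis using assms(2,3) by blast
qed

lemma is_mobius_unique:
  assumes fin: "finite P" and po: "partial_order_on' P le"
    and f: "is_mobius P le f" and g: "is_mobius P le g"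
  shows "f = g"
proof -
  have main: "\<forall>q. q \<in> P \<longrightarrow> card (ivl P le p q) = n \<longrightarrow> f p q = g p q" if p: "p \<in> P" for p n
  proof (induction n rule: less_induct)
    case (less n)
    show ?case
    proof (intro allI impI)
      fix q assume q: "q \<in> P" and c: "card (ivl P le p q) = n"
      define S where "S = {s\<in>P. le p s \<and> le s q \<and> s \<noteq> q}"
      have IH: "f p s = g p s" if "s \<in> S" for s
        using less.IH ivl_less[OF po fin p q, of s] that c unfolding S_def by blast
      have "f p q = (if p = q then 1 else if le p q then - (\<Sum>s\<in>S. f p s) else 0)"
           "g p q = (if p = q then 1 else if le p q then - (\<Sum>s\<in>S. g p s) else 0)"
        using is_mobius_rec[OF f p q] is_mobius_rec[OF g p q] unfolding S_def by simp_all
      moreover have "(\<Sum>s\<in>S. f p s) = (\<Sum>s\<in>S. g p s)" by (rule sum.cong[OF refl IH])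
      ultimately show "f p q = g p q" by simp
    qed
  qed
  show ?thesis
  proof (intro ext)
    fix p q
    show "f p q = g p q"
      using main is_mobius_outside[OF f] is_mobius_outside[OF g] by (cases "p \<in> P \<and> q \<in> P") auto
  qed
qed

text \<open>Existence: unfolding the recursion n times gives a function that is stable once n
  exceeds the size of the interval, hence satisfies the recursion for n = card P.\<close>

fun mobius_fuel :: "'a set \<Rightarrow> ('a \<Rightarrow> 'a \<Rightarrow> bool) \<Rightarrow> nat \<Rightarrow> 'a \<Rightarrow> 'a \<Rightarrow> int" where
  "mobius_fuel P le 0 p q = (if p \<in> P \<and> q \<in> P \<and> p = q then 1 else 0)"
| "mobius_fuel P le (Suc n) p q = (if p \<notin> P \<or> q \<notin> P then 0 else if p = q then 1
     else if le p q then - (\<Sum>s\<in>{s\<in>P. le p s \<and> le s q \<and> s \<noteq> q}. mobius_fuel P le n p s)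
     else 0)"

lemma mobius_fuel_stable:
  assumes fin: "finite P" and po: "partial_order_on' P le"
  shows "\<forall>p q k. p \<in> P \<longrightarrow> q \<in> P \<longrightarrow> card (ivl P le p q) \<le> Suc n \<longrightarrow>
           mobius_fuel P le (n + k) p q = mobius_fuel P le n p q"
proof (induction n)
  case 0
  show ?case
  proof (intro allI impI)
    fix p q k assume p: "p \<in> P" and q: "q \<in> P" and c: "card (ivl P le p q) \<le> Suc 0"
    have "\<not> le p q" if "p \<noteq> q"
    proof
      assume "le p q"
      then have "{p, q} \<subseteq> ivl P le p q" using p q po_refl[OF po] unfolding ivl_def by auto
      then have "card {p, q} \<le> card (ivl P le p q)" using fin unfolding ivl_def
        by (intro card_mono) auto
      then show False using c that by simp
    qed
    then show "mobius_fuel P le (0 + k) p q = mobius_fuel P le 0 p q"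
      using p q by (cases k) auto
  qed
next
  case (Suc n)
  show ?case
  proof (intro allI impI)
    fix p q k assume p: "p \<in> P" and q: "q \<in> P" and c: "card (ivl P le p q) \<le> Suc (Suc n)"
    define S where "S = {s\<in>P. le p s \<and> le s q \<and> s \<noteq> q}"
    have "mobius_fuel P le (n + k) p s = mobius_fuel P le n p s" if s: "s \<in> S" for s
    proof -
      have sP: "s \<in> P" using s unfolding S_def by simp
      have "card (ivl P le p s) < card (ivl P le p q)"
        using ivl_less[OF po fin p q sP] s unfolding S_def by simp
      then have "card (ivl P le p s) \<le> Suc n" using c by simp
      then show ?thesis using Suc.IH p sP by blast
    qed
    then have "(\<Sum>s\<in>S. mobius_fuel P le (n + k) p s) = (\<Sum>s\<in>S. mobius_fuel P le n p s)"
      by (rule sum.cong[OF refl])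
    then show "mobius_fuel P le (Suc n + k) p q = mobius_fuel P le (Suc n) p q"
      unfolding S_def by simp
  qed
qed

lemma is_mobius_fuel:
  assumes fin: "finite P" and po: "partial_order_on' P le"
  shows "is_mobius P le (mobius_fuel P le (card P))"
  unfolding is_mobius_def
proof (intro conjI allI impI ballI)
  fix p q assume "p \<notin> P \<or> q \<notin> P"
  then show "mobius_fuel P le (card P) p q = 0" by (cases "card P") auto
next
  fix p q assume p: "p \<in> P" and q: "q \<in> P"
  then obtain m where m: "card P = Suc m" using fin by (cases "card P") auto
  define S where "S = {s\<in>P. le p s \<and> le s q \<and> s \<noteq> q}"
  have "mobius_fuel P le (card P) p s = mobius_fuel P le m p s" if s: "s \<in> S" for s
  proof -
    have "card (ivl P le p s) < card (ivl P le p q)"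
      using ivl_less[OF po fin p q, of s] s unfolding S_def by auto
    moreover have "card (ivl P le p q) \<le> card P"
      using fin unfolding ivl_def by (intro card_mono) auto
    ultimately have "card (ivl P le p s) \<le> Suc m" using m by simp
    moreover have "s \<in> P" using s unfolding S_def by simp
    ultimately have "mobius_fuel P le (m + 1) p s = mobius_fuel P le m p s"
      using mobius_fuel_stable[OF fin po, of m] p by blast
    then show ?thesis using m by simp
  qed
  then have "(\<Sum>s\<in>S. mobius_fuel P le (card P) p s) = (\<Sum>s\<in>S. mobius_fuel P le m p s)"
    by (rule sum.cong[OF refl])
  then show "mobius_fuel P le (card P) p q = (if p = q then 1 else if le p q then
     - (\<Sum>s\<in>S. mobius_fuel P le (card P) p s) else 0)"
    using p q unfolding m S_def by simp
qed

lemma mobius_is_mobius: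
  assumes "finite P" "partial_order_on' P le"
  shows "is_mobius P le (mobius P le)"
proof -
  have "\<exists>!f. is_mobius P le f" using is_mobius_fuel[OF assms] is_mobius_unique[OF assms] by blast
  then show ?thesis unfolding mobius_def by (rule theI')
qed

lemma mobius_eqI:
  assumes "finite P" "partial_order_on' P le" "is_mobius P le f"
  shows "mobius P le = f"
  using is_mobius_unique[OF assms(1,2) mobius_is_mobius[OF assms(1,2)] assms(3)] .

lemma mobius_outside:
  assumes "finite P" "partial_order_on' P le" "p \<notin> P \<or> q \<notin> P"
  shows "mobius P le p q = 0"
  using is_mobius_outside[OF mobius_is_mobius[OF assms(1,2)] assms(3)] .

lemma mobius_rec:
  assumes "finite P" "partial_order_on' P le" "p \<in> P" "q \<in> P"
  shows "mobius P le p q = (if p = q then 1 else if le p q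
           then - (\<Sum>s\<in>{s\<in>P. le p s \<and> le s q \<and> s \<noteq> q}. mobius P le p s) else 0)"
  using is_mobius_rec[OF mobius_is_mobius[OF assms(1,2)] assms(3,4)] .

lemma mobius_interval_sum:
  assumes fin: "finite P" and po: "partial_order_on' P le"
    and p: "p \<in> P" and q: "q \<in> P" and pq: "le p q"
  shows "(\<Sum>s\<in>ivl P le p q. mobius P le p s) = (if p = q then 1 else 0)"
proof (cases "p = q")
  case True
  then have "ivl P le p q = {p}" using p po_refl[OF po] po_antisym[OF po] unfolding ivl_def by auto
  then show ?thesis using mobius_rec[OF fin po p p] True by simp
next
  case False
  have "ivl P le p q = insert q {s\<in>P. le p s \<and> le s q \<and> s \<noteq> q}"
    using q pq po_refl[OF po] unfolding ivl_def by auto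
  then show ?thesis using mobius_rec[OF fin po p q] fin False pq by (simp add: sum.insert)
qed

text \<open>On an order-convex subset the Moebius function is the restriction of the ambient one,
  because every interval of the subset is an interval of the ambient poset.\<close>

lemma mobius_convex_subset:
  assumes fin: "finite P" and po: "partial_order_on' P le" and sub: "S \<subseteq> P"
    and convex: "\<And>p q s. p \<in> S \<Longrightarrow> q \<in> S \<Longrightarrow> s \<in> P \<Longrightarrow> le p s \<Longrightarrow> le s q \<Longrightarrow> s \<in> S"
  shows "mobius S le = (\<lambda>p q. if p \<in> S \<and> q \<in> S then mobius P le p q else 0)"
proof (rule mobius_eqI)
  show "finite S" using fin sub by (simp add: finite_subset)
  show "partial_order_on' S le" using po sub by (rule po_subset)
  show "is_mobius S le (\<lambda>p q. if p \<in> S \<and> q \<in> S then mobius P le p q else 0)"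
    unfolding is_mobius_def
  proof (intro conjI allI impI ballI)
    fix p q assume p: "p \<in> S" and q: "q \<in> S"
    have eq: "{s\<in>S. le p s \<and> le s q \<and> s \<noteq> q} = {s\<in>P. le p s \<and> le s q \<and> s \<noteq> q}"
      using sub convex[OF p q] by blast
    have "(\<Sum>s\<in>{s\<in>S. le p s \<and> le s q \<and> s \<noteq> q}. if p \<in> S \<and> s \<in> S then mobius P le p s else 0)
        = (\<Sum>s\<in>{s\<in>P. le p s \<and> le s q \<and> s \<noteq> q}. mobius P le p s)"
      unfolding eq[symmetric] using p by (intro sum.cong) auto
    then show "(if p \<in> S \<and> q \<in> S then mobius P le p q else 0) = (if p = q then 1
        else if le p q then - (\<Sum>s\<in>{s\<in>S. le p s \<and> le s q \<and> s \<noteq> q}.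
          if p \<in> S \<and> s \<in> S then mobius P le p s else 0) else 0)"
      using mobius_rec[OF fin po, of p q] p q sub by (simp add: subsetD)
  qed auto
qed

lemma hat_po:
  assumes po: "partial_order_on' P le"
  shows "partial_order_on' (hat_set P) (hat_le le)"
  unfolding partial_order_on'_def
proof (intro conjI ballI impI)
  fix x assume "x \<in> hat_set P" then show "hat_le le x x"
    using po_refl[OF po] by (auto simp: hat_set_def hat_le_def)
next
  fix x y assume "x \<in> hat_set P" "y \<in> hat_set P" "hat_le le x y \<and> hat_le le y x"
  note h = this
  show "x = y"
  proof (cases y)
    case None
    then show ?thesis using h by (cases x) (auto simp: hat_le_def)
  next
    case (Some b)
    obtain a where xa: "x = Some a" and ab: "le a b" using h Some by (auto simp: hat_le_def)
    have ba: "le b a" using h xa Some by (simp add: hat_le_def)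
    have "a \<in> P" "b \<in> P" using h xa Some by (auto simp: hat_set_def)
    then show ?thesis using po_antisym[OF po] ab ba xa Some by blast
  qed
next
  fix x y w assume "x \<in> hat_set P" "y \<in> hat_set P" "w \<in> hat_set P" "hat_le le x y \<and> hat_le le y w"
  note h = this
  show "hat_le le x w"
  proof (cases w)
    case None then show ?thesis by (simp add: hat_le_def)
  next
    case (Some c)
    obtain b where yb: "y = Some b" and bc: "le b c" using h Some by (auto simp: hat_le_def)
    obtain a where xa: "x = Some a" and ab: "le a b" using h yb by (auto simp: hat_le_def)
    have "a \<in> P" "b \<in> P" "c \<in> P" using h xa yb Some by (auto simp: hat_set_def)
    then have "le a c" using po_trans[OF po] ab bc by blast
    then show ?thesis using xa Some by (simp add: hat_le_def)
  qed
qed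

lemma hat_mobius:
  assumes fin: "finite P" and po: "partial_order_on' P le"
  shows "mobius (hat_set P) (hat_le le) = (\<lambda>x y. case x of
      None \<Rightarrow> (if y = None then 1 else 0)
    | Some p \<Rightarrow> (case y of
        None \<Rightarrow> (if p \<in> P then - (\<Sum>s\<in>{s\<in>P. le p s}. mobius P le p s) else 0)
      | Some q \<Rightarrow> mobius P le p q))"
    (is "_ = ?F")
proof (rule mobius_eqI)
  show "finite (hat_set P)" using fin unfolding hat_set_def by simp
  show "partial_order_on' (hat_set P) (hat_le le)" using po by (rule hat_po)
  show "is_mobius (hat_set P) (hat_le le) ?F"
    unfolding is_mobius_def
  proof (intro conjI allI impI ballI)
    fix x y assume "x \<notin> hat_set P \<or> y \<notin> hat_set P"
    then show "?F x y = 0" using mobius_outside[OF fin po] unfolding hat_set_def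
      by (cases x; cases y) auto
  next
    fix x y assume x: "x \<in> hat_set P" and y: "y \<in> hat_set P"
    define S where "S = {s\<in>hat_set P. hat_le le x s \<and> hat_le le s y \<and> s \<noteq> y}"
    show "?F x y = (if x = y then 1 else if hat_le le x y then - (\<Sum>s\<in>S. ?F x s) else 0)"
    proof (cases x)
      case None then show ?thesis by (cases y) (auto simp: hat_le_def)
    next
      case (Some p)
      have pP: "p \<in> P" using x Some unfolding hat_set_def by auto
      show ?thesis
      proof (cases y)
        case None
        have "S = Some ` {s\<in>P. le p s}"
          using Some None unfolding S_def hat_set_def hat_le_def by auto
        then show ?thesis using Some None pP by (simp add: sum.reindex hat_le_def)
      next
        case (Some q)
        have qP: "q \<in> P" using y Some unfolding hat_set_def by auto
        have "S = Some ` {s\<in>P. le p s \<and> le s q \<and> s \<noteq> q}"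
          using \<open>x = Some p\<close> Some unfolding S_def hat_set_def hat_le_def by auto
        then show ?thesis using \<open>x = Some p\<close> Some mobius_rec[OF fin po pP qP]
          by (simp add: sum.reindex hat_le_def)
      qed
    qed
  qed
qed

text \<open>Every strict relation p < q in a finite poset starts with a covering step p <. w \<le> q:
  take w minimising the interval [p,w] among the elements strictly above p and below q.\<close>

lemma cover_below:
  assumes fin: "finite P" and po: "partial_order_on' P le"
    and p: "p \<in> P" and q: "q \<in> P" and pq: "le p q" and ne: "p \<noteq> q"
  obtains w where "covers P le p w" and "le w q"
proof -
  define W where "W = {w\<in>P. le p w \<and> w \<noteq> p \<and> le w q}"
  have "q \<in> W" using q pq ne po_refl[OF po] unfolding W_def by auto
  then obtain w where w: "w \<in> W"
    and wmin: "\<And>v. v \<in> W \<Longrightarrow> card (ivl P le p w) \<le> card (ivl P le p v)"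
    using ex_has_least_nat[of "\<lambda>w. w \<in> W" q "\<lambda>w. card (ivl P le p w)"] by blast
  have wP: "w \<in> P" and pw: "le p w" and wp: "w \<noteq> p" and wq: "le w q"
    using w unfolding W_def by auto
  have "\<not> (\<exists>v\<in>P. le p v \<and> le v w \<and> v \<noteq> p \<and> v \<noteq> w)"
  proof
    assume "\<exists>v\<in>P. le p v \<and> le v w \<and> v \<noteq> p \<and> v \<noteq> w"
    then obtain v where v: "v \<in> P" "le p v" "le v w" "v \<noteq> p" "v \<noteq> w" by blast
    have "v \<in> W" using v wq wP q po_trans[OF po] unfolding W_def by blast
    then have "card (ivl P le p w) \<le> card (ivl P le p v)" by (rule wmin)
    moreover have "card (ivl P le p v) < card (ivl P le p w)"
      using ivl_less[OF po fin p wP v(1) v(2) v(3) v(5)] .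
    ultimately show False by simp
  qed
  then have "covers P le p w" using p wP pw wp unfolding covers_def by auto
  then show ?thesis using wq that by blast
qed

text \<open>In a ranked poset the rank is strictly monotone: climb from p to q by covering steps,
  each of which raises the rank by one.\<close>

lemma rank_strict_mono:
  assumes rp: "ranked_poset P le rk"
    and "p \<in> P" "q \<in> P" "le p q" "p \<noteq> q"
  shows "rk p < rk q"
proof -
  have fin: "finite P" and po: "partial_order_on' P le"
    and cov: "\<And>x y. covers P le x y \<Longrightarrow> rk y = rk x + 1"
    using rp unfolding ranked_poset_def by auto
  have "\<forall>p. p \<in> P \<longrightarrow> le p q \<longrightarrow> p \<noteq> q \<longrightarrow> card (ivl P le p q) = n \<longrightarrow> rk p < rk q" for n
  proof (induction n rule: less_induct)
    case (less n)
    show ?case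
    proof (intro allI impI)
      fix p assume p: "p \<in> P" and pq: "le p q" and ne: "p \<noteq> q" and c: "card (ivl P le p q) = n"
      obtain w where pw: "covers P le p w" and wq: "le w q"
        using cover_below[OF fin po p \<open>q \<in> P\<close> pq ne] .
      have wP: "w \<in> P" and "le p w" "w \<noteq> p" using pw unfolding covers_def by auto
      have rw: "rk w = rk p + 1" using pw by (rule cov)
      show "rk p < rk q"
      proof (cases "w = q")
        case True then show ?thesis using rw by simp
      next
        case False
        have "ivl P le w q \<subseteq> ivl P le p q"
          using \<open>le p w\<close> wP p po_trans[OF po] unfolding ivl_def by blast
        moreover have "p \<in> ivl P le p q - ivl P le w q"
          using p pq wP \<open>le p w\<close> \<open>w \<noteq> p\<close> po_refl[OF po] po_antisym[OF po] unfolding ivl_def by blast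
        ultimately have "ivl P le w q \<subset> ivl P le p q" by blast
        moreover have "finite (ivl P le p q)" using fin unfolding ivl_def by simp
        ultimately have "card (ivl P le w q) < n" using c psubset_card_mono by blast
        then have "rk w < rk q" using less.IH wP wq False by blast
        then show ?thesis using rw by simp
      qed
    qed
  qed
  then show ?thesis using assms by blast
qed

lemma pair_sum:
  assumes "finite A"
  shows "(\<Sum>(x,y)\<in>{(x,y)\<in>A\<times>A. L x y}. h x y)
       = (\<Sum>x\<in>A. \<Sum>y\<in>A. if L x y then h x y else (0::'b::comm_monoid_add))"
proof -
  have "(\<Sum>(x,y)\<in>{(x,y)\<in>A\<times>A. L x y}. h x y) = (\<Sum>(x,y)\<in>A\<times>A. if L x y then h x y else 0)"
    using assms by (intro sum.mono_neutral_cong_left) (auto split: if_splits)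
  also have "\<dots> = (\<Sum>x\<in>A. \<Sum>y\<in>A. if L x y then h x y else 0)"
    by (simp add: sum.cartesian_product)
  finally show ?thesis .
qed

lemma hat_le_simps [simp]:
  "hat_le le (Some a) (Some b) = le a b" "hat_le le x None" "\<not> hat_le le None (Some b)"
  by (simp_all add: hat_le_def)

lemma hat_rk_simps [simp]:
  "hat_rk rk t (Some a) = rk a" "hat_rk rk t None = rk t + 1"
  by (simp_all add: hat_rk_def)

text \<open>The Moebius polynomial of any finite poset with a top adjoined: the pairs inside P give
  M_P, the pair (top,top) gives 1, and each pair (p,top) gives mu(p,top) x^(rk top - rk p).\<close>

lemma mobius_poly_hat:
  assumes fin: "finite P" and po: "partial_order_on' P le"
  shows "mobius_poly (hat_set P) (hat_le le) (hat_rk rk t) = 1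
     + (\<Sum>p\<in>P. monom (- (\<Sum>s\<in>{s\<in>P. le p s}. mobius P le p s)) (nat (rk t + 1 - rk p)))
     + mobius_poly P le rk"
proof -
  have "finite (hat_set P)" using fin unfolding hat_set_def by simp
  then show ?thesis
    unfolding mobius_poly_def mobius_z_def pair_sum[OF fin] pair_sum[OF \<open>finite (hat_set P)\<close>]
      hat_mobius[OF fin po] unfolding hat_set_def using fin
    by (simp add: sum.reindex sum.distrib monom_0 one_pCons add.assoc cong: if_cong)
qed

text \<open>Removing a maximal element t leaves an order-convex subset, so the Moebius function
  of R - {t} is the restriction of that of R.\<close>

lemma mobius_remove_max:
  assumes fin: "finite R" and po: "partial_order_on' R le"
    and t: "t \<in> R" and max: "\<forall>q\<in>R. le t q \<longrightarrow> q = t"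
  shows "mobius (R - {t}) le = (\<lambda>p q. if p \<in> R - {t} \<and> q \<in> R - {t} then mobius R le p q else 0)"
proof (rule mobius_convex_subset[OF fin po])
  fix p q s assume "p \<in> R - {t}" "q \<in> R - {t}" "s \<in> R" "le p s" "le s q"
  then show "s \<in> R - {t}" using max by blast
qed blast

lemma upper_sum_top:
  assumes fin: "finite R" and po: "partial_order_on' R le"
    and t: "t \<in> R" and top: "\<forall>x\<in>R. le x t" and p: "p \<in> R"
  shows "(\<Sum>s\<in>{s\<in>R. le p s}. mobius R le p s) = (if p = t then 1 else 0)"
proof -
  have "{s\<in>R. le p s} = ivl R le p t" using top unfolding ivl_def by auto
  then show ?thesis using mobius_interval_sum[OF fin po p t] top p by simp
qed

lemma upper_sum_remove_top:
  assumes fin: "finite R" and po: "partial_order_on' R le"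
    and t: "t \<in> R" and top: "\<forall>x\<in>R. le x t" and p: "p \<in> R - {t}"
  shows "(\<Sum>s\<in>{s\<in>R - {t}. le p s}. mobius (R - {t}) le p s) = - mobius R le p t"
proof -
  have max: "\<forall>q\<in>R. le t q \<longrightarrow> q = t" using po_antisym[OF po] t top by blast
  have eq: "{s\<in>R - {t}. le p s} = {s\<in>R. le p s \<and> le s t \<and> s \<noteq> t}" using top by auto
  have "(\<Sum>s\<in>{s\<in>R - {t}. le p s}. mobius (R - {t}) le p s)
      = (\<Sum>s\<in>{s\<in>R. le p s \<and> le s t \<and> s \<noteq> t}. mobius R le p s)"
    unfolding eq mobius_remove_max[OF fin po t max] using p by (intro sum.cong) auto
  also have "\<dots> = - mobius R le p t" using mobius_rec[OF fin po _ t] p top by simp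
  finally show ?thesis .
qed

lemma mobius_poly_hat_top:
  assumes fin: "finite R" and po: "partial_order_on' R le"
    and t: "t \<in> R" and top: "\<forall>x\<in>R. le x t"
  shows "mobius_poly (hat_set R) (hat_le le) (hat_rk rk t) = 1 - monom 1 1 + mobius_poly R le rk"
proof -
  have "(\<Sum>p\<in>R. monom (- (\<Sum>s\<in>{s\<in>R. le p s}. mobius R le p s)) (nat (rk t + 1 - rk p)))
      = (\<Sum>p\<in>R. if p = t then monom (-1) 1 else 0)"
    using upper_sum_top[OF fin po t top] by (intro sum.cong) auto
  also have "\<dots> = - monom 1 1" using fin t by (simp add: minus_monom)
  finally show ?thesis using mobius_poly_hat[OF fin po, of rk t] by simp
qed

lemma mobius_poly_dot:
  assumes rp: "ranked_poset R le rk" and t: "t \<in> R" and top: "\<forall>x\<in>R. le x t"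
  shows "mobius_poly (dot_set R t) (hat_le le) (hat_rk rk t)
       = 1 + monom 1 1 * (\<Sum>p\<in>R - {t}. mobius_z R le rk p t) + mobius_poly (R - {t}) le rk"
proof -
  have fin: "finite R" and po: "partial_order_on' R le" using rp unfolding ranked_poset_def by auto
  have dot: "dot_set R t = hat_set (R - {t})" using t unfolding dot_set_def hat_set_def by auto
  have "monom (- (\<Sum>s\<in>{s\<in>R - {t}. le p s}. mobius (R - {t}) le p s)) (nat (rk t + 1 - rk p))
      = monom 1 1 * mobius_z R le rk p t" if p: "p \<in> R - {t}" for p
  proof -
    have "rk p < rk t" using rank_strict_mono[OF rp _ t] p top by blast
    then have "nat (rk t + 1 - rk p) = Suc (nat (rk t - rk p))" by simp
    then show ?thesis using upper_sum_remove_top[OF fin po t top p]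
      by (simp add: mobius_z_def mult_monom)
  qed
  then have "(\<Sum>p\<in>R - {t}. monom (- (\<Sum>s\<in>{s\<in>R - {t}. le p s}. mobius (R - {t}) le p s))
               (nat (rk t + 1 - rk p)))
      = monom 1 1 * (\<Sum>p\<in>R - {t}. mobius_z R le rk p t)"
    unfolding sum_distrib_left by (rule sum.cong[OF refl])
  then show ?thesis
    unfolding dot using mobius_poly_hat[of "R - {t}" le rk t] fin po_subset[OF po] by simp
qed

lemma mobius_poly_remove_top:
  assumes fin: "finite R" and po: "partial_order_on' R le"
    and t: "t \<in> R" and top: "\<forall>x\<in>R. le x t"
  shows "mobius_poly R le rk = (\<Sum>p\<in>R. mobius_z R le rk p t) + mobius_poly (R - {t}) le rk"
proof -
  have max: "\<forall>q\<in>R. le t q \<longrightarrow> q = t" using po_antisym[OF po] t top by blast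
  define z where "z p q = (if le p q then mobius_z R le rk p q else 0)" for p q
  have z_rest: "mobius_z (R - {t}) le rk p q = mobius_z R le rk p q" if "p \<in> R - {t}" "q \<in> R - {t}" for p q
    using that unfolding mobius_z_def mobius_remove_max[OF fin po t max] by simp
  have "mobius_poly R le rk = (\<Sum>p\<in>R. \<Sum>q\<in>R. z p q)"
    unfolding mobius_poly_def pair_sum[OF fin] z_def ..
  also have "\<dots> = (\<Sum>p\<in>R. z p t + (\<Sum>q\<in>R - {t}. z p q))"
    by (intro sum.cong refl sum.remove[OF fin t])
  also have "\<dots> = (\<Sum>p\<in>R. mobius_z R le rk p t) + (\<Sum>p\<in>R. \<Sum>q\<in>R - {t}. z p q)"
    using top by (simp add: sum.distrib z_def)
  also have "(\<Sum>p\<in>R. \<Sum>q\<in>R - {t}. z p q) = (\<Sum>p\<in>R - {t}. \<Sum>q\<in>R - {t}. z p q)"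
  proof -
    have "(\<Sum>q\<in>R - {t}. z t q) = 0" using max unfolding z_def by (intro sum.neutral) auto
    then show ?thesis using sum.remove[OF fin t, of "\<lambda>p. \<Sum>q\<in>R - {t}. z p q"] by simp
  qed
  also have "(\<Sum>p\<in>R - {t}. \<Sum>q\<in>R - {t}. z p q) = mobius_poly (R - {t}) le rk"
    unfolding mobius_poly_def pair_sum[OF finite_Diff[OF fin]] z_def using z_rest
    by (intro sum.cong refl) auto
  finally show ?thesis .
qed

text \<open>Since every element other than t has rank below |R| = rk t, the top polynomial only
  collects the pairs (p,t).\<close>

lemma g_poly_top:
  assumes rp: "ranked_poset R le rk" and t: "t \<in> R" and top: "\<forall>x\<in>R. le x t"
  shows "g_poly R le rk (rk t) = (\<Sum>p\<in>R. mobius_z R le rk p t)"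
proof -
  have below: "rk p < rk t" if "p \<in> R" "p \<noteq> t" for p
    using rank_strict_mono[OF rp that(1) t] top that by blast
  have "{(p,q)\<in>R \<times> R. le p q \<and> rk p \<le> rk t \<and> rk t \<le> rk q} = (\<lambda>p. (p,t)) ` R"
    using t top below by (force simp: less_le_not_le)
  then show ?thesis unfolding g_poly_def by (simp add: sum.reindex inj_on_def)
qed

theorem mainTheorem10:
  fixes R :: "'a set" and le :: "'a \<Rightarrow> 'a \<Rightarrow> bool" and rk :: "'a \<Rightarrow> int" and t :: 'a
  assumes "ranked_poset R le rk"
    and "t \<in> R" and "\<forall>x\<in>R. le x t"
  shows "mobius_poly (dot_set R t) (hat_le le) (hat_rk rk t)
         = mobius_poly (hat_set R) (hat_le le) (hat_rk rk t)
           - [:1, -1:] * g_poly R le rk (rk t)"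
proof -
  have fin: "finite R" and po: "partial_order_on' R le"
    using assms(1) unfolding ranked_poset_def by auto
  define x :: "int poly" where "x = monom 1 1"
  define G where "G = (\<Sum>p\<in>R. mobius_z R le rk p t)"
  define M' where "M' = mobius_poly (R - {t}) le rk"
  have G: "G = 1 + (\<Sum>p\<in>R - {t}. mobius_z R le rk p t)"
    unfolding G_def using fin assms(2) mobius_rec[OF fin po assms(2,2)]
    by (simp add: sum.remove mobius_z_def one_pCons monom_0)
  have dot: "mobius_poly (dot_set R t) (hat_le le) (hat_rk rk t) = 1 + x * (G - 1) + M'"
    using mobius_poly_dot[OF assms] unfolding G x_def M'_def by simp
  have hat: "mobius_poly (hat_set R) (hat_le le) (hat_rk rk t) = 1 - x + (G + M')"
    using mobius_poly_hat_top[OF fin po assms(2,3)] mobius_poly_remove_top[OF fin po assms(2,3)]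
    unfolding x_def G_def M'_def by simp
  have factor: "[:1, -1:] = 1 - x" unfolding x_def by (simp add: monom_altdef one_pCons)
  show ?thesis
    unfolding dot hat g_poly_top[OF assms] G_def[symmetric] factor by (simp add: algebra_simps)
qed

end
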